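(* Let $g\in L^2(\mathbb{R}^3)$ be even or odd. Then for every $\theta\in\mathbb{R}$, $\mathbf{D}_g(\theta)$ is Fréchet differentiable at every point $(u,\alpha)\in L^2(\mathbb{R}^3)\oplus L^2(\mathbb{R}^3)$, and for all $(v_1,\beta_1),(v_2,\beta_2)\in L^2\oplus L^2$, $$\mathrm{Im}\langle d\mathbf{D}_g(\theta)_{(u,\alpha)}(v_1,\beta_1),d\mathbf{D}_g(\theta)_{(u,\alpha)}(v_2,\beta_2)\rangle_{L^2\oplus L^2}=\mathrm{Im}\langle(v_1,\beta_1),(v_2,\beta_2)\rangle_{L^2\oplus L^2}.$$
   Context: For even or odd $g\in L^2$, $\mathbf{D}_g(\theta)(u,\alpha)=(u\,e^{-i\theta A_g},\ \alpha-i\theta gF(|u|^2))$ with $A_g(x)=\int(g(k)\bar\alpha(k)e^{-ik\cdot x}+\bar g(k)\alpha(k)e^{ik\cdot x})dk$ and $F(|u|^2)(k)=\int e^{-ik\cdot x}|u(x)|^2dx$. $d\mathbf{D}_g(\theta)_{(u,\alpha)}$ denotes the Fréchet derivative at $(u,\alpha)$, $L^2\oplus L^2$ being regarded as a real Hilbert space. *)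

theory Defs
  imports "HOL-Analysis.Analysis"
begin

text \<open>Complex-valued functions on R^3; L^2 is represented by square-integrable
  representatives, all identities in L^2 being understood almost everywhere.\<close>

type_synonym fn3 = "real^3 \<Rightarrow> complex"
type_synonym fn3pair = "fn3 \<times> fn3"

definition L2 :: "fn3 set" where
  "L2 = {f. f \<in> borel_measurable lebesgue \<and> integrable lebesgue (\<lambda>x. (cmod (f x))^2)}"

definition L2P :: "fn3pair set" where
  "L2P = L2 \<times> L2"

definition l2_inner :: "fn3 \<Rightarrow> fn3 \<Rightarrow> complex" where
  "l2_inner f h = integral\<^sup>L lebesgue (\<lambda>x. cnj (f x) * h x)"

definition l2_norm :: "fn3 \<Rightarrow> real" where
  "l2_norm f = sqrt (integral\<^sup>L lebesgue (\<lambda>x. (cmod (f x))^2))"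

definition pinner :: "fn3pair \<Rightarrow> fn3pair \<Rightarrow> complex" where
  "pinner p q = l2_inner (fst p) (fst q) + l2_inner (snd p) (snd q)"

definition pnorm :: "fn3pair \<Rightarrow> real" where
  "pnorm p = sqrt ((l2_norm (fst p))^2 + (l2_norm (snd p))^2)"

definition pae_eq :: "fn3pair \<Rightarrow> fn3pair \<Rightarrow> bool" where
  "pae_eq p q \<longleftrightarrow> (AE x in lebesgue. fst p x = fst q x) \<and> (AE x in lebesgue. snd p x = snd q x)"

definition padd :: "fn3pair \<Rightarrow> fn3pair \<Rightarrow> fn3pair" where
  "padd p q = (\<lambda>x. fst p x + fst q x, \<lambda>x. snd p x + snd q x)"

definition pdiff :: "fn3pair \<Rightarrow> fn3pair \<Rightarrow> fn3pair" where
  "pdiff p q = (\<lambda>x. fst p x - fst q x, \<lambda>x. snd p x - snd q x)"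

definition pscale :: "real \<Rightarrow> fn3pair \<Rightarrow> fn3pair" where
  "pscale a p = (\<lambda>x. of_real a * fst p x, \<lambda>x. of_real a * snd p x)"

definition Fsq :: "fn3 \<Rightarrow> fn3" where
  "Fsq u k = integral\<^sup>L lebesgue (\<lambda>x. exp (- \<i> * of_real (k \<bullet> x)) * of_real ((cmod (u x))^2))"

definition A_g :: "fn3 \<Rightarrow> fn3 \<Rightarrow> fn3" where
  "A_g g \<alpha> x = integral\<^sup>L lebesgue (\<lambda>k. g k * cnj (\<alpha> k) * exp (- \<i> * of_real (k \<bullet> x))
                                         + cnj (g k) * \<alpha> k * exp (\<i> * of_real (k \<bullet> x)))"

definition D_g :: "fn3 \<Rightarrow> real \<Rightarrow> fn3pair \<Rightarrow> fn3pair" where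
  "D_g g \<theta> p = (\<lambda>x. fst p x * exp (- \<i> * of_real \<theta> * A_g g (snd p) x),
                 \<lambda>k. snd p k - \<i> * of_real \<theta> * g k * Fsq (fst p) k)"

definition frechet_deriv_at :: "(fn3pair \<Rightarrow> fn3pair) \<Rightarrow> fn3pair \<Rightarrow> (fn3pair \<Rightarrow> fn3pair) \<Rightarrow> bool" where
  "frechet_deriv_at D p L \<longleftrightarrow>
     (\<forall>h\<in>L2P. L h \<in> L2P) \<and>
     (\<forall>a::real. \<forall>h1\<in>L2P. \<forall>h2\<in>L2P.
         pae_eq (L (padd (pscale a h1) h2)) (padd (pscale a (L h1)) (L h2))) \<and>
     (\<exists>C. \<forall>h\<in>L2P. pnorm (L h) \<le> C * pnorm h) \<and>
     (\<forall>\<epsilon>>0. \<exists>\<delta>>0. \<forall>h\<in>L2P. pnorm h < \<delta> \<longrightarrow>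
         pnorm (pdiff (pdiff (D (padd p h)) (D p)) (L h)) \<le> \<epsilon> * pnorm h)"

definition even_fn :: "fn3 \<Rightarrow> bool" where
  "even_fn g \<longleftrightarrow> (AE k in lebesgue. g (- k) = g k)"

definition odd_fn :: "fn3 \<Rightarrow> bool" where
  "odd_fn g \<longleftrightarrow> (AE k in lebesgue. g (- k) = - g k)"

end

theory Submission
  imports Defs "HOL-Probability.Characteristic_Functions"
begin

text \<open>
  With the real potential \<open>A_g(\<alpha>) = 2 Re F(g cnj \<alpha>)\<close>, which is real-linear in \<open>\<alpha>\<close>, the derivative of
  \<open>D_g(\<theta>)\<close> at \<open>(u, \<alpha>)\<close> is the bounded real-linear map
  \<open>(v, \<beta>) \<mapsto> (exp(-i\<theta>A_g(\<alpha>)) (v - i\<theta> A_g(\<beta>) u), \<beta> - i\<theta> g F(2 Re(cnj u v)))\<close>.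
  The remainder is quadratic in \<open>(v, \<beta>)\<close>: \<open>|exp(-it) - 1 + it| \<le> t\<^sup>2/2\<close>, and \<open>A_g(\<beta>)\<close> and
  \<open>F(|v|\<^sup>2)\<close> are bounded pointwise by products of \<open>L\<^sup>2\<close> norms.

  In \<open>Im \<langle>dD q\<^sub>1, dD q\<^sub>2\<rangle>\<close> the unimodular phase drops out. The cross terms of order \<open>\<theta>\<close>,
  \<open>\<integral> A_g(\<beta>\<^sub>1) Re(cnj u v\<^sub>2)\<close> and \<open>\<integral> Re(cnj \<beta>\<^sub>1 g F(2 Re(cnj u v\<^sub>2)))\<close>, coincide by Fubini
  and cancel against their partners with the indices exchanged. The term of order \<open>\<theta>\<^sup>2\<close> is
  \<open>\<integral> |g|\<^sup>2 Im(cnj (F w\<^sub>1) F w\<^sub>2)\<close> with real \<open>w\<^sub>j\<close>; since \<open>F w (-k) = cnj (F w k)\<close> and \<open>|g|\<close> is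
  even, its integrand is odd, so it vanishes. Fr\'echet derivatives agree almost everywhere, so every
  derivative of \<open>D_g(\<theta>)\<close> inherits the identity.
\<close>

section \<open>Square-integrable functions\<close>

lemma sigma_finite_lebesgue: "sigma_finite_measure (lebesgue :: 'a::euclidean_space measure)"
proof -
  obtain A :: "'a set set" where A: "countable A" "A \<subseteq> sets lborel" "\<Union>A = space lborel"
     "\<forall>a\<in>A. emeasure lborel a \<noteq> \<infinity>"
    using sigma_finite_measure.sigma_finite_countable[OF sigma_finite_lborel] by blast
  show ?thesis
    by unfold_locales (use A in \<open>intro exI[of _ A], auto\<close>)
qed

interpretation lebesgue3: sigma_finite_measure "lebesgue :: (real^3) measure"
  by (rule sigma_finite_lebesgue)

interpretation lebesgue3_pair: pair_sigma_finite "lebesgue :: (real^3) measure" "lebesgue :: (real^3) measure" ..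

lemma measurable_ident_lebesgue_borel[measurable]: "(\<lambda>x. x) \<in> lebesgue \<rightarrow>\<^sub>M (borel :: 'a::euclidean_space measure)"
  by (rule measurable_completion) simp

lemma borel_measurable_cnj[measurable (raw)]:
  "f \<in> borel_measurable M \<Longrightarrow> (\<lambda>x. cnj (f x)) \<in> borel_measurable M"
  by (rule borel_measurable_continuous_on[where f=cnj]) (auto intro: continuous_intros)

lemma power2_sum_le: "((x::real) + y)^2 \<le> 2 * x^2 + 2 * y^2"
  using sum_squares_bound[of x y] unfolding power2_sum by linarith

definition l2_sqnorm :: "fn3 \<Rightarrow> real" where
  "l2_sqnorm f = integral\<^sup>L lebesgue (\<lambda>x. (cmod (f x))^2)"

lemma l2_sqnorm_nonneg: "0 \<le> l2_sqnorm f"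
  unfolding l2_sqnorm_def by (rule Bochner_Integration.integral_nonneg_AE) auto

lemma l2_norm_eq_sqrt: "l2_norm f = sqrt (l2_sqnorm f)"
  unfolding l2_norm_def l2_sqnorm_def ..

lemma l2_norm_power2: "(l2_norm f)^2 = l2_sqnorm f"
  unfolding l2_norm_eq_sqrt using l2_sqnorm_nonneg by simp

lemma l2_norm_nonneg: "0 \<le> l2_norm f"
  unfolding l2_norm_eq_sqrt by (simp add: l2_sqnorm_nonneg)

lemma L2_measurable: "f \<in> L2 \<Longrightarrow> f \<in> borel_measurable lebesgue"
  and L2_integrable_power2: "f \<in> L2 \<Longrightarrow> integrable lebesgue (\<lambda>x. (cmod (f x))^2)"
  and L2I: "f \<in> borel_measurable lebesgue \<Longrightarrow> integrable lebesgue (\<lambda>x. (cmod (f x))^2) \<Longrightarrow> f \<in> L2"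
  unfolding L2_def by auto

lemma power2_le_dominated:
  fixes a b1 b2 c1 c2 :: real
  assumes "0 \<le> a" "a \<le> c1 * b1 + c2 * b2"
  shows "a^2 \<le> 2 * c1^2 * b1^2 + 2 * c2^2 * b2^2"
proof -
  have "a^2 \<le> (c1 * b1 + c2 * b2)^2" using assms by (simp add: power_mono)
  also have "\<dots> \<le> 2 * c1^2 * b1^2 + 2 * c2^2 * b2^2"
    using power2_sum_le[of "c1 * b1" "c2 * b2"] by (simp add: power_mult_distrib)
  finally show ?thesis .
qed

lemma L2_dominated:
  assumes "f1 \<in> L2" "f2 \<in> L2" "h \<in> borel_measurable lebesgue"
    and "\<And>x. cmod (h x) \<le> c1 * cmod (f1 x) + c2 * cmod (f2 x)"
  shows "h \<in> L2"
proof (rule L2I[OF assms(3)])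
  show "integrable lebesgue (\<lambda>x. (cmod (h x))^2)"
  proof (rule Bochner_Integration.integrable_bound[OF Bochner_Integration.integrable_add[OF
        integrable_mult_right[OF L2_integrable_power2[OF assms(1)], of "2 * c1^2"]
        integrable_mult_right[OF L2_integrable_power2[OF assms(2)], of "2 * c2^2"]]])
    show "(\<lambda>x. (cmod (h x))\<^sup>2) \<in> borel_measurable lebesgue" using assms(3) by measurable
    show "AE x in lebesgue. norm ((cmod (h x))\<^sup>2)
        \<le> norm (2 * c1^2 * (cmod (f1 x))\<^sup>2 + 2 * c2^2 * (cmod (f2 x))\<^sup>2)"
      using power2_le_dominated[OF norm_ge_zero assms(4)] by simp
  qed
qed

lemma L2_mult_bounded:
  assumes "f \<in> L2" "c \<in> borel_measurable lebesgue" "\<And>x. cmod (c x) \<le> B"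
  shows "(\<lambda>x. c x * f x) \<in> L2"
proof (rule L2_dominated[OF assms(1,1)])
  show "(\<lambda>x. c x * f x) \<in> borel_measurable lebesgue" using assms L2_measurable by measurable
  show "cmod (c x * f x) \<le> B * cmod (f x) + 0 * cmod (f x)" for x
    using assms(3)[of x] by (simp add: norm_mult mult_right_mono)
qed

lemma L2_cmult: "f \<in> L2 \<Longrightarrow> (\<lambda>x. c * f x) \<in> L2"
  by (rule L2_mult_bounded[of f "\<lambda>_. c" "cmod c"]) auto

lemma L2_add:
  assumes "f \<in> L2" "h \<in> L2"
  shows "(\<lambda>x. f x + h x) \<in> L2"
  by (rule L2_dominated[OF assms, of _ 1 1])
     (use assms L2_measurable in \<open>auto intro: norm_triangle_ineq\<close>)

lemma L2_diff: "f \<in> L2 \<Longrightarrow> h \<in> L2 \<Longrightarrow> (\<lambda>x. f x - h x) \<in> L2"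
  using L2_add[of f "\<lambda>x. (-1) * h x"] L2_cmult[of h "-1"] by simp

lemma L2_cnj: "f \<in> L2 \<Longrightarrow> (\<lambda>x. cnj (f x)) \<in> L2"
  by (rule L2_dominated[of f f _ 1 0]) (auto intro: L2_measurable borel_measurable_cnj)

lemma integrable_L2_mult:
  assumes "f \<in> L2" "h \<in> L2"
  shows "integrable lebesgue (\<lambda>x. f x * h x)"
proof (rule Bochner_Integration.integrable_bound[OF Bochner_Integration.integrable_add[OF
      L2_integrable_power2[OF assms(1)] L2_integrable_power2[OF assms(2)]]])
  show "(\<lambda>x. f x * h x) \<in> borel_measurable lebesgue" using assms L2_measurable by measurable
  have "cmod (f x) * cmod (h x) \<le> (cmod (f x))\<^sup>2 + (cmod (h x))\<^sup>2" for x
    using sum_squares_bound[of "cmod (f x)" "cmod (h x)"]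
      mult_nonneg_nonneg[OF norm_ge_zero[of "f x"] norm_ge_zero[of "h x"]]
    by linarith
  then show "AE x in lebesgue. norm (f x * h x) \<le> norm ((cmod (f x))\<^sup>2 + (cmod (h x))\<^sup>2)"
    by (simp add: norm_mult)
qed

lemma integrable_L2_norm_mult:
  assumes "f \<in> L2" "h \<in> L2"
  shows "integrable lebesgue (\<lambda>x. cmod (f x) * cmod (h x))"
  using integrable_norm[OF integrable_L2_mult[OF assms]] by (simp add: norm_mult)

lemma integrable_Re_Im_cnj_mult:
  assumes "f \<in> L2" "h \<in> L2"
  shows "integrable lebesgue (\<lambda>x. Re (cnj (f x) * h x))"
    and "integrable lebesgue (\<lambda>x. Im (cnj (f x) * h x))"
  using integrable_bounded_linear[OF bounded_linear_Re integrable_L2_mult[OF L2_cnj[OF assms(1)] assms(2)]]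
    integrable_bounded_linear[OF bounded_linear_Im integrable_L2_mult[OF L2_cnj[OF assms(1)] assms(2)]]
  by simp_all

lemma integrable_bounded_mult:
  fixes f c :: "'a::euclidean_space \<Rightarrow> 'b::{real_normed_field, banach, second_countable_topology}"
  assumes "integrable lebesgue f" "c \<in> borel_measurable lebesgue" "\<And>x. norm (c x) \<le> B"
  shows "integrable lebesgue (\<lambda>x. c x * f x)"
proof (rule Bochner_Integration.integrable_bound[OF integrable_mult_right[OF integrable_norm[OF assms(1)], of B]])
  show "(\<lambda>x. c x * f x) \<in> borel_measurable lebesgue" using assms by measurable
  have "norm (c x * f x) \<le> B * norm (f x)" for x
    using assms(3)[of x] by (simp add: norm_mult mult_right_mono)
  then show "AE x in lebesgue. norm (c x * f x) \<le> norm (B * norm (f x))"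
    by (auto intro: order_trans[OF _ abs_ge_self])
qed

lemma l2_sqnorm_dominated:
  assumes "f1 \<in> L2" "f2 \<in> L2"
    and "\<And>x. cmod (h x) \<le> c1 * cmod (f1 x) + c2 * cmod (f2 x)"
  shows "l2_sqnorm h \<le> 2 * c1^2 * l2_sqnorm f1 + 2 * c2^2 * l2_sqnorm f2"
proof (cases "integrable lebesgue (\<lambda>x. (cmod (h x))^2)")
  case True
  have "l2_sqnorm h \<le> integral\<^sup>L lebesgue (\<lambda>x. 2 * c1^2 * (cmod (f1 x))^2 + 2 * c2^2 * (cmod (f2 x))^2)"
    unfolding l2_sqnorm_def
    by (rule Bochner_Integration.integral_mono[OF True])
       (use L2_integrable_power2[OF assms(1)] L2_integrable_power2[OF assms(2)]
          power2_le_dominated[OF norm_ge_zero assms(3)] in auto)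
  also have "\<dots> = 2 * c1^2 * l2_sqnorm f1 + 2 * c2^2 * l2_sqnorm f2"
    unfolding l2_sqnorm_def using L2_integrable_power2[OF assms(1)] L2_integrable_power2[OF assms(2)] by simp
  finally show ?thesis .
next
  case False
  then have "l2_sqnorm h = 0" unfolding l2_sqnorm_def by (simp add: not_integrable_integral_eq)
  then show ?thesis using l2_sqnorm_nonneg[of f1] l2_sqnorm_nonneg[of f2] by simp
qed

lemma l2_sqnorm_cmult: "l2_sqnorm (\<lambda>x. c * f x) = (cmod c)^2 * l2_sqnorm f"
  unfolding l2_sqnorm_def by (simp add: norm_mult power_mult_distrib)

lemma l2_sqnorm_cong_AE:
  assumes "f \<in> borel_measurable lebesgue" "h \<in> borel_measurable lebesgue" "AE x in lebesgue. f x = h x"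
  shows "l2_sqnorm f = l2_sqnorm h"
  unfolding l2_sqnorm_def by (rule integral_cong_AE) (use assms in auto)

lemma l2_sqnorm_eq_0_imp_AE_zero:
  assumes "f \<in> L2" "l2_sqnorm f = 0"
  shows "AE x in lebesgue. f x = 0"
proof -
  have "AE x in lebesgue. (cmod (f x))^2 = 0"
    using integral_nonneg_eq_0_iff_AE[OF L2_integrable_power2[OF assms(1)]] assms(2)
    unfolding l2_sqnorm_def by auto
  then show ?thesis by auto
qed

lemma le_sqrt_mult_if_quadratic_nonneg:
  fixes a b c :: real
  assumes "\<And>s. 0 \<le> s^2 * a - 2 * s * c + b" "0 \<le> a" "0 \<le> b"
  shows "c \<le> sqrt a * sqrt b"
proof (cases "c \<le> 0")
  case True then show ?thesis using assms(2,3) by (simp add: order_trans)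
next
  case False
  show ?thesis
  proof (cases "a = 0")
    case True
    have "0 \<le> ((b + 1) / (2 * c))^2 * a - 2 * ((b + 1) / (2 * c)) * c + b" by (rule assms(1))
    with True False show ?thesis by (simp add: field_simps)
  next
    case a: False
    have "0 \<le> (c / a)^2 * a - 2 * (c / a) * c + b" by (rule assms(1))
    then have "c^2 \<le> a * b" using a assms(2) by (simp add: field_simps power2_eq_square)
    then show ?thesis by (simp add: real_le_rsqrt real_sqrt_mult[symmetric])
  qed
qed

lemma integral_norm_mult_le_l2_norm:
  assumes "f \<in> L2" "h \<in> L2"
  shows "integral\<^sup>L lebesgue (\<lambda>x. cmod (f x) * cmod (h x)) \<le> l2_norm f * l2_norm h"
proof -
  let ?I = "integral\<^sup>L lebesgue (\<lambda>x. cmod (f x) * cmod (h x))"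
  have "0 \<le> s^2 * l2_sqnorm f - 2 * s * ?I + l2_sqnorm h" for s
  proof -
    have "0 \<le> integral\<^sup>L lebesgue (\<lambda>x. (s * cmod (f x) - cmod (h x))^2)"
      by (rule Bochner_Integration.integral_nonneg_AE) auto
    also have "(\<lambda>x. (s * cmod (f x) - cmod (h x))^2) =
       (\<lambda>x. s^2 * (cmod (f x))^2 - 2 * s * (cmod (f x) * cmod (h x)) + (cmod (h x))^2)"
      by (rule ext) (simp add: power2_diff power_mult_distrib)
    also have "integral\<^sup>L lebesgue \<dots> = s^2 * l2_sqnorm f - 2 * s * ?I + l2_sqnorm h"
      unfolding l2_sqnorm_def
      using integrable_L2_norm_mult[OF assms] L2_integrable_power2[OF assms(1)] L2_integrable_power2[OF assms(2)]
      by simp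
    finally show ?thesis .
  qed
  then show ?thesis
    unfolding l2_norm_eq_sqrt by (rule le_sqrt_mult_if_quadratic_nonneg) (simp_all add: l2_sqnorm_nonneg)
qed

lemma l2_inner_cong_AE:
  assumes "f \<in> L2" "f' \<in> L2" "h \<in> L2" "h' \<in> L2"
    and "AE x in lebesgue. f x = f' x" "AE x in lebesgue. h x = h' x"
  shows "l2_inner f h = l2_inner f' h'"
  unfolding l2_inner_def
proof (rule integral_cong_AE)
  show "(\<lambda>x. cnj (f x) * h x) \<in> borel_measurable lebesgue"
    using L2_measurable[OF assms(1)] L2_measurable[OF assms(3)] by measurable
  show "(\<lambda>x. cnj (f' x) * h' x) \<in> borel_measurable lebesgue"
    using L2_measurable[OF assms(2)] L2_measurable[OF assms(4)] by measurable
  show "AE x in lebesgue. cnj (f x) * h x = cnj (f' x) * h' x"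
    using assms(5,6) by eventually_elim simp
qed

lemma Im_l2_inner:
  assumes "f \<in> L2" "h \<in> L2"
  shows "Im (l2_inner f h) = integral\<^sup>L lebesgue (\<lambda>x. Im (cnj (f x) * h x))"
  unfolding l2_inner_def
  by (rule integral_Im[OF integrable_L2_mult[OF L2_cnj[OF assms(1)] assms(2)], symmetric])

lemma euclidean_representation_uminus: "(\<Sum>j\<in>Basis. - ((x \<bullet> j) *\<^sub>R j)) = - x"
  by (simp add: sum_negf euclidean_representation)

lemma measurable_uminus_lebesgue: "(uminus :: 'a::euclidean_space \<Rightarrow> 'a) \<in> lebesgue \<rightarrow>\<^sub>M lebesgue"
  using lebesgue_affine_measurable[of "\<lambda>_. -1" "0::'a"] by (simp add: euclidean_representation_uminus)

lemma integral_reflect_lebesgue: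
  fixes f :: "'a::euclidean_space \<Rightarrow> real"
  assumes "f \<in> borel_measurable lebesgue"
  shows "integral\<^sup>L lebesgue (\<lambda>x. f (- x)) = integral\<^sup>L lebesgue f"
proof -
  have "distr lebesgue lebesgue uminus = (lebesgue :: 'a measure)"
    using lebesgue_affine_euclidean[of "\<lambda>_. -1" "0::'a"] by (simp add: density_1 euclidean_representation_uminus)
  then show ?thesis
    using integral_distr[OF measurable_uminus_lebesgue assms] by simp
qed

section \<open>The Fourier transform of integrable functions\<close>

definition fourier :: "fn3 \<Rightarrow> fn3" where
  "fourier \<phi> y = integral\<^sup>L lebesgue (\<lambda>x. exp (- \<i> * complex_of_real (y \<bullet> x)) * \<phi> x)"

lemma norm_exp_minus_i_times[simp]: "cmod (exp (- \<i> * complex_of_real t)) = 1"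
  by (simp add: norm_exp_eq_Re)

lemma norm_exp_minus_i_sub_one_le: "cmod (exp (- \<i> * complex_of_real t) - 1) \<le> \<bar>t\<bar>"
  using iexp_approx1[of "- t" 0] by simp

lemma norm_exp_minus_i_taylor2_le:
  "cmod (exp (- \<i> * complex_of_real t) - 1 + \<i> * complex_of_real t) \<le> t^2 / 2"
  using iexp_approx1[of "- t" 1] by (simp add: algebra_simps power2_eq_square)

lemma exp_inner_measurable_pair:
  "(\<lambda>z::(real^3) \<times> (real^3). exp (- \<i> * complex_of_real (fst z \<bullet> snd z)))
     \<in> borel_measurable (lebesgue \<Otimes>\<^sub>M lebesgue)"
proof -
  have "(\<lambda>z::(real^3) \<times> (real^3). fst z) \<in> borel_measurable (lebesgue \<Otimes>\<^sub>M lebesgue)"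
    and "(\<lambda>z::(real^3) \<times> (real^3). snd z) \<in> borel_measurable (lebesgue \<Otimes>\<^sub>M lebesgue)"
    by (rule measurable_compose[OF measurable_fst measurable_ident_lebesgue_borel]
             measurable_compose[OF measurable_snd measurable_ident_lebesgue_borel])+
  then show ?thesis by measurable
qed

lemma fourier_measurable[measurable]:
  assumes "\<phi> \<in> borel_measurable lebesgue"
  shows "fourier \<phi> \<in> borel_measurable lebesgue"
proof -
  have "(\<lambda>z::(real^3) \<times> (real^3). \<phi> (snd z)) \<in> borel_measurable (lebesgue \<Otimes>\<^sub>M lebesgue)"
    by (rule measurable_compose[OF measurable_snd assms])
  with exp_inner_measurable_pair
  have "(\<lambda>(y, x). exp (- \<i> * complex_of_real (y \<bullet> x)) * \<phi> x) \<in> borel_measurable (lebesgue \<Otimes>\<^sub>M lebesgue)"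
    unfolding case_prod_beta by measurable
  then show ?thesis
    unfolding fourier_def[abs_def] by (rule lebesgue3.borel_measurable_lebesgue_integral)
qed

lemma norm_fourier_le: "cmod (fourier \<phi> y) \<le> integral\<^sup>L lebesgue (\<lambda>x. cmod (\<phi> x))"
  using Bochner_Integration.integral_norm_bound[of lebesgue "\<lambda>x. exp (- \<i> * complex_of_real (y \<bullet> x)) * \<phi> x"]
  unfolding fourier_def by (simp add: norm_mult)

lemma integrable_exp_inner_mult:
  assumes "integrable lebesgue \<phi>"
  shows "integrable lebesgue (\<lambda>x. exp (- \<i> * complex_of_real (y \<bullet> x)) * \<phi> x)"
proof (rule integrable_bounded_mult[OF assms, of _ 1])
  show "(\<lambda>x. exp (- \<i> * complex_of_real (y \<bullet> x))) \<in> borel_measurable lebesgue"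
    by measurable
qed simp

lemma fourier_add:
  assumes "integrable lebesgue \<phi>" "integrable lebesgue \<psi>"
  shows "fourier (\<lambda>x. \<phi> x + \<psi> x) y = fourier \<phi> y + fourier \<psi> y"
  unfolding fourier_def
  using integrable_exp_inner_mult[OF assms(1), of y] integrable_exp_inner_mult[OF assms(2), of y]
  by (simp add: distrib_left)

lemma fourier_cmult: "fourier (\<lambda>x. c * \<phi> x) y = c * fourier \<phi> y"
  unfolding fourier_def by (simp add: mult.left_commute)

lemma fourier_of_real_uminus:
  "fourier (\<lambda>x. complex_of_real (w x)) (- y) = cnj (fourier (\<lambda>x. complex_of_real (w x)) y)"
proof -
  have "(\<lambda>x. exp (- \<i> * complex_of_real ((- y) \<bullet> x)) * complex_of_real (w x))
      = (\<lambda>x. cnj (exp (- \<i> * complex_of_real (y \<bullet> x)) * complex_of_real (w x)))"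
    by (simp add: exp_cnj)
  then show ?thesis unfolding fourier_def by (simp only: Bochner_Integration.integral_cnj)
qed

lemma integral_fourier_mult_swap:
  assumes "integrable lebesgue \<phi>" "integrable lebesgue w"
  shows "integral\<^sup>L lebesgue (\<lambda>x. fourier \<phi> x * w x) = integral\<^sup>L lebesgue (\<lambda>k. \<phi> k * fourier w k)"
proof -
  define H where "H = (\<lambda>(x::real^3) (k::real^3). exp (- \<i> * complex_of_real (x \<bullet> k)) * \<phi> k * w x)"
  have "(\<lambda>z::(real^3) \<times> (real^3). \<phi> (snd z)) \<in> borel_measurable (lebesgue \<Otimes>\<^sub>M lebesgue)"
    and "(\<lambda>z::(real^3) \<times> (real^3). w (fst z)) \<in> borel_measurable (lebesgue \<Otimes>\<^sub>M lebesgue)"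
    using assms by (auto intro: measurable_compose[OF measurable_snd] measurable_compose[OF measurable_fst])
  with exp_inner_measurable_pair have H_measurable: "case_prod H \<in> borel_measurable (lebesgue \<Otimes>\<^sub>M lebesgue)"
    unfolding H_def by (simp add: case_prod_beta) measurable
  have "integrable (lebesgue \<Otimes>\<^sub>M lebesgue) (case_prod H)"
  proof (rule lebesgue3_pair.Fubini_integrable[OF H_measurable])
    have "(\<lambda>x. \<integral>k. norm (case_prod H (x, k)) \<partial>lebesgue) = (\<lambda>x. cmod (w x) * integral\<^sup>L lebesgue (\<lambda>k. cmod (\<phi> k)))"
      unfolding H_def by (simp add: norm_mult mult.commute)
    then show "integrable lebesgue (\<lambda>x. \<integral>k. norm (case_prod H (x, k)) \<partial>lebesgue)"
      using assms(2) by simp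
    show "AE x in lebesgue. integrable lebesgue (\<lambda>k. case_prod H (x, k))"
      using integrable_mult_left[OF integrable_exp_inner_mult[OF assms(1)]] unfolding H_def
      by (simp add: mult.assoc)
  qed
  then have "(\<integral>k. (\<integral>x. H x k \<partial>lebesgue) \<partial>lebesgue) = (\<integral>x. (\<integral>k. H x k \<partial>lebesgue) \<partial>lebesgue)"
    by (rule lebesgue3_pair.Fubini_integral)
  moreover have "(\<integral>k. H x k \<partial>lebesgue) = fourier \<phi> x * w x" for x
    unfolding H_def fourier_def by simp
  moreover have "(\<integral>x. H x k \<partial>lebesgue) = \<phi> k * fourier w k" for k
    unfolding H_def fourier_def by (simp add: inner_commute mult.commute mult.left_commute)
  ultimately show ?thesis by simp
qed

section \<open>The two nonlinear ingredients of \<open>D_g\<close>\<close>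

definition A_real :: "fn3 \<Rightarrow> fn3 \<Rightarrow> real^3 \<Rightarrow> real" where
  "A_real g \<alpha> x = 2 * Re (fourier (\<lambda>k. g k * cnj (\<alpha> k)) x)"

lemma A_g_eq_A_real:
  assumes "g \<in> L2" "\<alpha> \<in> L2"
  shows "A_g g \<alpha> x = complex_of_real (A_real g \<alpha> x)"
proof -
  define z where "z = (\<lambda>k. exp (- \<i> * complex_of_real (x \<bullet> k)) * (g k * cnj (\<alpha> k)))"
  have z: "integrable lebesgue z"
    unfolding z_def by (rule integrable_exp_inner_mult[OF integrable_L2_mult[OF assms(1) L2_cnj[OF assms(2)]]])
  have "g k * cnj (\<alpha> k) * exp (- \<i> * of_real (k \<bullet> x)) + cnj (g k) * \<alpha> k * exp (\<i> * of_real (k \<bullet> x))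
      = z k + cnj (z k)" for k
    unfolding z_def by (simp add: exp_cnj inner_commute)
  then have "A_g g \<alpha> x = integral\<^sup>L lebesgue (\<lambda>k. z k + cnj (z k))"
    unfolding A_g_def by simp
  also have "\<dots> = complex_of_real (2 * Re (integral\<^sup>L lebesgue z))"
    using z by (simp add: Bochner_Integration.integral_cnj complex_add_cnj)
  finally show ?thesis unfolding A_real_def fourier_def z_def .
qed

lemma A_real_measurable[measurable]:
  assumes "g \<in> borel_measurable lebesgue" "\<alpha> \<in> borel_measurable lebesgue"
  shows "A_real g \<alpha> \<in> borel_measurable lebesgue"
  unfolding A_real_def[abs_def] using assms by measurable

lemma abs_A_real_le:
  assumes "g \<in> L2" "\<alpha> \<in> L2"
  shows "\<bar>A_real g \<alpha> x\<bar> \<le> 2 * l2_norm g * l2_norm \<alpha>"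
proof -
  have "\<bar>Re (fourier (\<lambda>k. g k * cnj (\<alpha> k)) x)\<bar> \<le> cmod (fourier (\<lambda>k. g k * cnj (\<alpha> k)) x)"
    by (rule abs_Re_le_cmod)
  also have "\<dots> \<le> integral\<^sup>L lebesgue (\<lambda>k. cmod (g k) * cmod (\<alpha> k))"
    using norm_fourier_le[of "\<lambda>k. g k * cnj (\<alpha> k)" x] by (simp add: norm_mult)
  also have "\<dots> \<le> l2_norm g * l2_norm \<alpha>" by (rule integral_norm_mult_le_l2_norm[OF assms])
  finally show ?thesis unfolding A_real_def by simp
qed

lemma A_real_linear:
  assumes "g \<in> L2" "\<alpha>1 \<in> L2" "\<alpha>2 \<in> L2"
  shows "A_real g (\<lambda>k. complex_of_real a * \<alpha>1 k + \<alpha>2 k) x = a * A_real g \<alpha>1 x + A_real g \<alpha>2 x"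
proof -
  have "(\<lambda>k. g k * cnj (complex_of_real a * \<alpha>1 k + \<alpha>2 k)) =
      (\<lambda>k. complex_of_real a * (g k * cnj (\<alpha>1 k)) + g k * cnj (\<alpha>2 k))"
    by (simp add: algebra_simps)
  then have "fourier (\<lambda>k. g k * cnj (complex_of_real a * \<alpha>1 k + \<alpha>2 k)) x =
      complex_of_real a * fourier (\<lambda>k. g k * cnj (\<alpha>1 k)) x + fourier (\<lambda>k. g k * cnj (\<alpha>2 k)) x"
    using integrable_L2_mult[OF assms(1) L2_cnj[OF assms(2)]] integrable_L2_mult[OF assms(1) L2_cnj[OF assms(3)]]
    by (simp add: fourier_add fourier_cmult)
  then show ?thesis unfolding A_real_def by simp
qed

text \<open>The derivative of \<open>|u|\<^sup>2\<close> in the direction \<open>v\<close>.\<close>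

definition dsq :: "fn3 \<Rightarrow> fn3 \<Rightarrow> real^3 \<Rightarrow> real" where
  "dsq u v x = 2 * Re (cnj (u x) * v x)"

lemma dsq_measurable[measurable]:
  assumes "u \<in> borel_measurable lebesgue" "v \<in> borel_measurable lebesgue"
  shows "dsq u v \<in> borel_measurable lebesgue"
  unfolding dsq_def[abs_def] using assms by measurable

lemma norm_add_power2_eq_dsq: "(cmod (u x + v x))^2 = (cmod (u x))^2 + dsq u v x + (cmod (v x))^2"
  unfolding dsq_def cmod_power2 by (simp add: power2_sum algebra_simps)

lemma dsq_linear: "dsq u (\<lambda>x. complex_of_real a * v1 x + v2 x) x = a * dsq u v1 x + dsq u v2 x"
  unfolding dsq_def by (simp add: algebra_simps)

lemma integrable_dsq:
  assumes "u \<in> L2" "v \<in> L2"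
  shows "integrable lebesgue (dsq u v)"
  unfolding dsq_def[abs_def] by (rule integrable_mult_right[OF integrable_Re_Im_cnj_mult(1)[OF assms]])

lemma integrable_of_real_norm_power2:
  assumes "u \<in> L2"
  shows "integrable lebesgue (\<lambda>x. complex_of_real ((cmod (u x))^2))"
  by (rule integrable_of_real[OF L2_integrable_power2[OF assms]])

lemma norm_fourier_dsq_le:
  assumes "u \<in> L2" "v \<in> L2"
  shows "cmod (fourier (\<lambda>x. complex_of_real (dsq u v x)) k) \<le> 2 * l2_norm u * l2_norm v"
proof -
  have "cmod (fourier (\<lambda>x. complex_of_real (dsq u v x)) k) \<le> integral\<^sup>L lebesgue (\<lambda>x. \<bar>dsq u v x\<bar>)"
    using norm_fourier_le[of "\<lambda>x. complex_of_real (dsq u v x)" k] by simp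
  also have "\<dots> \<le> integral\<^sup>L lebesgue (\<lambda>x. 2 * (cmod (u x) * cmod (v x)))"
  proof (rule Bochner_Integration.integral_mono)
    show "integrable lebesgue (\<lambda>x. \<bar>dsq u v x\<bar>)"
      using integrable_abs[OF integrable_dsq[OF assms]] .
    show "\<bar>dsq u v x\<bar> \<le> 2 * (cmod (u x) * cmod (v x))" for x
      using abs_Re_le_cmod[of "cnj (u x) * v x"] unfolding dsq_def by (simp add: norm_mult)
  qed (use integrable_L2_norm_mult[OF assms] in simp)
  also have "\<dots> \<le> 2 * (l2_norm u * l2_norm v)"
    using integral_norm_mult_le_l2_norm[OF assms] by simp
  finally show ?thesis by simp
qed

lemma Fsq_eq_fourier: "Fsq u = fourier (\<lambda>x. complex_of_real ((cmod (u x))^2))"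
  unfolding Fsq_def[abs_def] fourier_def[abs_def] ..

lemma norm_Fsq_le:
  assumes "u \<in> L2"
  shows "cmod (Fsq u k) \<le> l2_sqnorm u"
  using norm_fourier_le[of "\<lambda>x. complex_of_real ((cmod (u x))^2)" k]
  unfolding Fsq_eq_fourier l2_sqnorm_def by (simp only: norm_of_real abs_power2 abs_norm_cancel)

lemma Fsq_add:
  assumes "u \<in> L2" "v \<in> L2"
  shows "Fsq (\<lambda>x. u x + v x) k
     = Fsq u k + fourier (\<lambda>x. complex_of_real (dsq u v x)) k + Fsq v k"
proof -
  have "Fsq (\<lambda>x. u x + v x) k = fourier (\<lambda>x. (complex_of_real ((cmod (u x))^2) + complex_of_real (dsq u v x))
        + complex_of_real ((cmod (v x))^2)) k"
    unfolding Fsq_eq_fourier by (simp add: norm_add_power2_eq_dsq del: of_real_power)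
  also have "\<dots> = Fsq u k + fourier (\<lambda>x. complex_of_real (dsq u v x)) k + Fsq v k"
    unfolding Fsq_eq_fourier
    using integrable_of_real_norm_power2[OF assms(1)] integrable_of_real_norm_power2[OF assms(2)]
      integrable_of_real[OF integrable_dsq[OF assms], where 'a=complex]
    by (simp add: fourier_add del: of_real_power)
  finally show ?thesis .
qed

section \<open>The direct sum \<open>L\<^sup>2 \<oplus> L\<^sup>2\<close>\<close>

definition pzero :: fn3pair where
  "pzero = (\<lambda>x. 0, \<lambda>x. 0)"

lemma L2P_fst: "h \<in> L2P \<Longrightarrow> fst h \<in> L2" and L2P_snd: "h \<in> L2P \<Longrightarrow> snd h \<in> L2"
  unfolding L2P_def by (auto simp: mem_Times_iff)

lemma pzero_L2P: "pzero \<in> L2P"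
  unfolding pzero_def L2P_def by (auto intro: L2I)

lemma pscale_L2P: "h \<in> L2P \<Longrightarrow> pscale t h \<in> L2P"
  unfolding pscale_def L2P_def using L2_cmult by (auto simp: mem_Times_iff)

lemma padd_L2P: "h1 \<in> L2P \<Longrightarrow> h2 \<in> L2P \<Longrightarrow> padd h1 h2 \<in> L2P"
  unfolding padd_def L2P_def using L2_add by (auto simp: mem_Times_iff)

lemma pdiff_L2P: "h1 \<in> L2P \<Longrightarrow> h2 \<in> L2P \<Longrightarrow> pdiff h1 h2 \<in> L2P"
  unfolding pdiff_def L2P_def using L2_diff by (auto simp: mem_Times_iff)

lemma pnorm_eq_sqrt: "pnorm p = sqrt (l2_sqnorm (fst p) + l2_sqnorm (snd p))"
  unfolding pnorm_def l2_norm_power2 ..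

lemma l2_norm_le_pnorm: "l2_norm (fst p) \<le> pnorm p" "l2_norm (snd p) \<le> pnorm p"
  unfolding pnorm_def by (rule real_le_rsqrt, simp)+

lemma pnorm_nonneg: "0 \<le> pnorm p"
  unfolding pnorm_def by simp

lemma pnorm_pscale: "pnorm (pscale t h) = \<bar>t\<bar> * pnorm h"
proof -
  have "pnorm (pscale t h) = sqrt (t^2 * (l2_sqnorm (fst h) + l2_sqnorm (snd h)))"
    unfolding pnorm_eq_sqrt pscale_def by (simp add: l2_sqnorm_cmult algebra_simps)
  then show ?thesis unfolding pnorm_eq_sqrt by (simp add: real_sqrt_mult)
qed

lemma pnorm_pdiff_le:
  assumes "h1 \<in> L2P" "h2 \<in> L2P" "pnorm h1 \<le> c" "pnorm h2 \<le> c"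
  shows "pnorm (pdiff h1 h2) \<le> 2 * c"
proof -
  have diff: "l2_sqnorm (\<lambda>x. f1 x - f2 x) \<le> 2 * l2_sqnorm f1 + 2 * l2_sqnorm f2" if "f1 \<in> L2" "f2 \<in> L2" for f1 f2
    using l2_sqnorm_dominated[where h="\<lambda>x. f1 x - f2 x", OF that, of 1 1] by (simp add: norm_triangle_ineq4)
  have "(pnorm (pdiff h1 h2))^2 \<le> 2 * (pnorm h1)^2 + 2 * (pnorm h2)^2"
    using diff[OF L2P_fst[OF assms(1)] L2P_fst[OF assms(2)]] diff[OF L2P_snd[OF assms(1)] L2P_snd[OF assms(2)]]
    unfolding pnorm_eq_sqrt pdiff_def using l2_sqnorm_nonneg by (simp add: add_nonneg_nonneg)
  also have "\<dots> \<le> (2 * c)^2"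
    using power_mono[OF assms(3) pnorm_nonneg, of 2] power_mono[OF assms(4) pnorm_nonneg, of 2]
    by (simp add: power_mult_distrib)
  finally show ?thesis
    by (rule power2_le_imp_le) (use pnorm_nonneg[of h1] assms(3) in simp)
qed

lemma pae_eq_refl: "pae_eq p p"
  unfolding pae_eq_def by simp

lemma pnorm_cong_pae_eq:
  assumes "p \<in> L2P" "q \<in> L2P" "pae_eq p q"
  shows "pnorm p = pnorm q"
  unfolding pnorm_eq_sqrt
  using l2_sqnorm_cong_AE[OF L2_measurable[OF L2P_fst[OF assms(1)]] L2_measurable[OF L2P_fst[OF assms(2)]]]
    l2_sqnorm_cong_AE[OF L2_measurable[OF L2P_snd[OF assms(1)]] L2_measurable[OF L2P_snd[OF assms(2)]]]
    assms(3) unfolding pae_eq_def by simp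

lemma pae_eq_pzero_if_pnorm_eq_0:
  assumes "p \<in> L2P" "pnorm p = 0"
  shows "pae_eq p pzero"
proof -
  have "l2_sqnorm (fst p) = 0" "l2_sqnorm (snd p) = 0"
    using assms(2) l2_sqnorm_nonneg[of "fst p"] l2_sqnorm_nonneg[of "snd p"] unfolding pnorm_eq_sqrt
    by simp_all
  then show ?thesis
    unfolding pae_eq_def pzero_def
    using l2_sqnorm_eq_0_imp_AE_zero L2P_fst[OF assms(1)] L2P_snd[OF assms(1)] by simp
qed

lemma pinner_cong_pae_eq:
  assumes "p \<in> L2P" "p' \<in> L2P" "q \<in> L2P" "q' \<in> L2P" "pae_eq p p'" "pae_eq q q'"
  shows "pinner p q = pinner p' q'"
  unfolding pinner_def
  using l2_inner_cong_AE[OF L2P_fst[OF assms(1)] L2P_fst[OF assms(2)] L2P_fst[OF assms(3)] L2P_fst[OF assms(4)]]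
    l2_inner_cong_AE[OF L2P_snd[OF assms(1)] L2P_snd[OF assms(2)] L2P_snd[OF assms(3)] L2P_snd[OF assms(4)]]
    assms(5,6) unfolding pae_eq_def by simp

section \<open>Fr\'echet derivatives on \<open>L\<^sup>2 \<oplus> L\<^sup>2\<close>\<close>

definition frechet_remainder :: "(fn3pair \<Rightarrow> fn3pair) \<Rightarrow> fn3pair \<Rightarrow> (fn3pair \<Rightarrow> fn3pair) \<Rightarrow> fn3pair \<Rightarrow> fn3pair" where
  "frechet_remainder D p L h = pdiff (pdiff (D (padd p h)) (D p)) (L h)"

lemma frechet_deriv_atI_quadratic_remainder:
  assumes "\<And>h. h \<in> L2P \<Longrightarrow> L h \<in> L2P"
    and "\<And>a h1 h2. h1 \<in> L2P \<Longrightarrow> h2 \<in> L2P \<Longrightarrow> L (padd (pscale a h1) h2) = padd (pscale a (L h1)) (L h2)"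
    and "\<And>h. h \<in> L2P \<Longrightarrow> pnorm (L h) \<le> C * pnorm h"
    and remainder: "\<And>h. h \<in> L2P \<Longrightarrow> pnorm (frechet_remainder D p L h) \<le> K * (pnorm h)^2"
  shows "frechet_deriv_at D p L"
  unfolding frechet_deriv_at_def frechet_remainder_def[symmetric]
proof (intro conjI ballI allI impI exI)
  fix \<epsilon> :: real assume "0 < \<epsilon>"
  define \<delta> where "\<delta> = \<epsilon> / (\<bar>K\<bar> + 1)"
  show "0 < \<delta>" unfolding \<delta>_def using \<open>0 < \<epsilon>\<close> by simp
  fix h assume h: "h \<in> L2P" "pnorm h < \<delta>"
  have "\<bar>K\<bar> * pnorm h \<le> \<bar>K\<bar> * \<delta>" using h(2) by (simp add: mult_left_mono)
  also have "\<dots> \<le> \<epsilon>" unfolding \<delta>_def using \<open>0 < \<epsilon>\<close> by (simp add: field_simps)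
  finally have "\<bar>K\<bar> * pnorm h \<le> \<epsilon>" .
  then have "K * (pnorm h)^2 \<le> \<epsilon> * pnorm h"
    using pnorm_nonneg[of h] unfolding power2_eq_square
    by (metis abs_ge_self mult.assoc mult_right_mono order_trans)
  then show "pnorm (frechet_remainder D p L h) \<le> \<epsilon> * pnorm h"
    using remainder[OF h(1)] by linarith
qed (use assms pae_eq_refl in auto)

lemma frechet_deriv_at_pscale:
  assumes "frechet_deriv_at D p L" "h \<in> L2P"
  shows "pae_eq (L (pscale t h)) (pscale t (L h))"
proof -
  have linear: "pae_eq (L (padd (pscale a h1) h2)) (padd (pscale a (L h1)) (L h2))"
    if "h1 \<in> L2P" "h2 \<in> L2P" for a h1 h2
    using assms(1) that unfolding frechet_deriv_at_def by blast
  have "padd (pscale 1 pzero) pzero = pzero" "padd (pscale t h) pzero = pscale t h"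
    unfolding padd_def pscale_def pzero_def by simp_all
  then have "pae_eq (L pzero) (padd (L pzero) (L pzero))" "pae_eq (L (pscale t h)) (padd (pscale t (L h)) (L pzero))"
    using linear[OF pzero_L2P pzero_L2P, of 1] linear[OF assms(2) pzero_L2P, of t]
    by (simp_all add: pscale_def)
  then show ?thesis
    unfolding pae_eq_def padd_def pscale_def by (auto elim!: AE_mp)
qed

lemma frechet_deriv_at_diff_le:
  assumes D: "\<And>q. q \<in> L2P \<Longrightarrow> D q \<in> L2P" and "p \<in> L2P"
    and L: "frechet_deriv_at D p L" and L': "frechet_deriv_at D p L'"
    and h: "h \<in> L2P" and "0 < \<epsilon>"
  shows "pnorm (pdiff (L h) (L' h)) \<le> 2 * \<epsilon> * pnorm h"
proof -
  have L_L2P: "L q \<in> L2P" and L'_L2P: "L' q \<in> L2P" if "q \<in> L2P" for q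
    using L L' that unfolding frechet_deriv_at_def by blast+
  obtain \<delta>1 where "0 < \<delta>1" and \<delta>1: "\<And>q. q \<in> L2P \<Longrightarrow> pnorm q < \<delta>1 \<Longrightarrow>
      pnorm (frechet_remainder D p L q) \<le> \<epsilon> * pnorm q"
    using L \<open>0 < \<epsilon>\<close> unfolding frechet_deriv_at_def frechet_remainder_def[symmetric] by meson
  obtain \<delta>2 where "0 < \<delta>2" and \<delta>2: "\<And>q. q \<in> L2P \<Longrightarrow> pnorm q < \<delta>2 \<Longrightarrow>
      pnorm (frechet_remainder D p L' q) \<le> \<epsilon> * pnorm q"
    using L' \<open>0 < \<epsilon>\<close> unfolding frechet_deriv_at_def frechet_remainder_def[symmetric] by meson
  txt \<open>Rescale \<open>h\<close> into both \<open>\<delta>\<close>-balls; a.e. homogeneity of \<open>L\<close> and \<open>L'\<close> undoes the scaling.\<close>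
  define N where "N = pnorm h"
  define t where "t = min \<delta>1 \<delta>2 / (N + 1)"
  have "0 \<le> N" unfolding N_def by (rule pnorm_nonneg)
  then have "0 < t" unfolding t_def using \<open>0 < \<delta>1\<close> \<open>0 < \<delta>2\<close> by simp
  have "t * N = min \<delta>1 \<delta>2 * (N / (N + 1))" unfolding t_def by simp
  also have "\<dots> < min \<delta>1 \<delta>2 * 1"
    using \<open>0 \<le> N\<close> \<open>0 < \<delta>1\<close> \<open>0 < \<delta>2\<close> by (intro mult_strict_left_mono) auto
  finally have "t * N < min \<delta>1 \<delta>2" by simp
  define q where "q = pscale t h"
  have q: "q \<in> L2P" "pnorm q = t * N"
    unfolding q_def N_def using pscale_L2P[OF h] pnorm_pscale \<open>0 < t\<close> by simp_all
  have R: "frechet_remainder D p L q \<in> L2P" "frechet_remainder D p L' q \<in> L2P"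
    unfolding frechet_remainder_def using q(1) \<open>p \<in> L2P\<close>
    by (blast intro: pdiff_L2P D padd_L2P L_L2P L'_L2P)+
  have "pdiff (frechet_remainder D p L' q) (frechet_remainder D p L q) = pdiff (L q) (L' q)"
    unfolding frechet_remainder_def pdiff_def by simp
  then have "pnorm (pdiff (L q) (L' q)) \<le> 2 * (\<epsilon> * (t * N))"
    using pnorm_pdiff_le[OF R(2,1)] \<delta>1[OF q(1)] \<delta>2[OF q(1)] q(2) \<open>t * N < min \<delta>1 \<delta>2\<close> by simp
  moreover have "pae_eq (pdiff (L q) (L' q)) (pscale t (pdiff (L h) (L' h)))"
    using frechet_deriv_at_pscale[OF L h, of t] frechet_deriv_at_pscale[OF L' h, of t]
    unfolding q_def pae_eq_def pdiff_def pscale_def by (auto elim!: AE_mp simp: algebra_simps)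
  then have "pnorm (pdiff (L q) (L' q)) = pnorm (pscale t (pdiff (L h) (L' h)))"
    by (rule pnorm_cong_pae_eq[rotated 2]) (use q(1) h in \<open>simp_all add: L_L2P L'_L2P pdiff_L2P pscale_L2P\<close>)
  also have "\<dots> = t * pnorm (pdiff (L h) (L' h))"
    using pnorm_pscale \<open>0 < t\<close> by simp
  ultimately have "t * pnorm (pdiff (L h) (L' h)) \<le> t * (2 * \<epsilon> * N)"
    by (simp add: mult_ac)
  then show ?thesis unfolding N_def using \<open>0 < t\<close> by simp
qed

lemma frechet_deriv_at_unique:
  assumes "\<And>q. q \<in> L2P \<Longrightarrow> D q \<in> L2P" "p \<in> L2P"
    and L: "frechet_deriv_at D p L" and L': "frechet_deriv_at D p L'" and h: "h \<in> L2P"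
  shows "pae_eq (L h) (L' h)"
proof -
  have d: "pdiff (L h) (L' h) \<in> L2P"
    using L L' h unfolding frechet_deriv_at_def by (blast intro: pdiff_L2P)
  have "pnorm (pdiff (L h) (L' h)) \<le> 0 + e" if "0 < e" for e
  proof -
    have "pnorm (pdiff (L h) (L' h)) \<le> 2 * (e / (2 * (pnorm h + 1))) * pnorm h"
      by (rule frechet_deriv_at_diff_le[OF assms]) (use that pnorm_nonneg[of h] in \<open>auto intro!: divide_pos_pos\<close>)
    also have "\<dots> \<le> e"
      using that pnorm_nonneg[of h] by (simp add: field_simps)
    finally show ?thesis by simp
  qed
  then have "pnorm (pdiff (L h) (L' h)) = 0"
    using field_le_epsilon pnorm_nonneg by (metis order_antisym)
  then have "pae_eq (pdiff (L h) (L' h)) pzero"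
    by (rule pae_eq_pzero_if_pnorm_eq_0[OF d])
  then show ?thesis
    unfolding pae_eq_def pdiff_def pzero_def by (auto elim!: AE_mp)
qed

section \<open>The derivative of \<open>D_g(\<theta>)\<close>\<close>

lemma D_g_eq:
  assumes "g \<in> L2" "\<alpha> \<in> L2"
  shows "D_g g \<theta> (u, \<alpha>) = (\<lambda>x. u x * exp (- \<i> * complex_of_real (\<theta> * A_real g \<alpha> x)),
                               \<lambda>k. \<alpha> k - \<i> * complex_of_real \<theta> * g k * Fsq u k)"
  unfolding D_g_def by (simp add: A_g_eq_A_real[OF assms] mult.assoc)

lemma D_g_L2P:
  assumes "g \<in> L2" "q \<in> L2P"
  shows "D_g g \<theta> q \<in> L2P"
proof -
  obtain u \<alpha> where q: "q = (u, \<alpha>)" "u \<in> L2" "\<alpha> \<in> L2" using assms(2) unfolding L2P_def by auto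
  have [measurable]: "u \<in> borel_measurable lebesgue" "\<alpha> \<in> borel_measurable lebesgue" "g \<in> borel_measurable lebesgue"
    using q assms L2_measurable by auto
  have "(\<lambda>x. exp (- \<i> * complex_of_real (\<theta> * A_real g \<alpha> x)) * u x) \<in> L2"
    by (rule L2_mult_bounded[OF q(2), where B=1]) simp_all
  moreover have "(\<lambda>k. \<alpha> k - \<i> * complex_of_real \<theta> * g k * Fsq u k) \<in> L2"
  proof (rule L2_dominated[OF q(3) assms(1), of _ 1 "\<bar>\<theta>\<bar> * l2_sqnorm u"])
    show "(\<lambda>k. \<alpha> k - \<i> * complex_of_real \<theta> * g k * Fsq u k) \<in> borel_measurable lebesgue"
      unfolding Fsq_eq_fourier by measurable
    fix k
    have "cmod (\<alpha> k - \<i> * complex_of_real \<theta> * g k * Fsq u k) \<le> cmod (\<alpha> k) + \<bar>\<theta>\<bar> * cmod (Fsq u k) * cmod (g k)"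
      by (rule order_trans[OF norm_triangle_ineq4]) (simp add: norm_mult)
    also have "\<dots> \<le> cmod (\<alpha> k) + \<bar>\<theta>\<bar> * l2_sqnorm u * cmod (g k)"
      using norm_Fsq_le[OF q(2)] by (simp add: mult_left_mono mult_right_mono)
    finally show "cmod (\<alpha> k - \<i> * complex_of_real \<theta> * g k * Fsq u k)
        \<le> 1 * cmod (\<alpha> k) + \<bar>\<theta>\<bar> * l2_sqnorm u * cmod (g k)" by simp
  qed
  ultimately show ?thesis unfolding q(1) D_g_eq[OF assms(1) q(3)] L2P_def by (simp add: mult.commute)
qed

lemma Im_cnj_mult_phase:
  fixes V1 V2 U E :: complex and a1 a2 :: real
  assumes "cmod E = 1"
  shows "Im (cnj (E * (V1 - \<i> * complex_of_real a1 * U)) * (E * (V2 - \<i> * complex_of_real a2 * U)))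
       = Im (cnj V1 * V2) + (a1 * Re (cnj U * V2) - a2 * Re (cnj U * V1))"
proof -
  have ce: "cnj E * E = 1"
    using complex_norm_square[of E] assms by (simp add: mult.commute)
  have "cnj (E * (V1 - \<i> * complex_of_real a1 * U)) * (E * (V2 - \<i> * complex_of_real a2 * U))
      = (cnj E * E) * ((cnj V1 + \<i> * complex_of_real a1 * cnj U) * (V2 - \<i> * complex_of_real a2 * U))"
    by (simp add: algebra_simps)
  also have "\<dots> = (cnj V1 + \<i> * complex_of_real a1 * cnj U) * (V2 - \<i> * complex_of_real a2 * U)"
    unfolding ce by simp
  finally have eq: "cnj (E * (V1 - \<i> * complex_of_real a1 * U)) * (E * (V2 - \<i> * complex_of_real a2 * U))
      = (cnj V1 + \<i> * complex_of_real a1 * cnj U) * (V2 - \<i> * complex_of_real a2 * U)" .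
  show ?thesis unfolding eq by (simp add: algebra_simps)
qed

lemma Im_cnj_mult_shift:
  fixes B1 B2 G F1 F2 :: complex and c :: real
  shows "Im (cnj (B1 - \<i> * complex_of_real c * G * F1) * (B2 - \<i> * complex_of_real c * G * F2))
     = Im (cnj B1 * B2) - c * Re (cnj B1 * G * F2) + c * Re (cnj B2 * G * F1)
       + c^2 * ((cmod G)^2 * Im (cnj F1 * F2))"
  unfolding cmod_power2 by (simp add: algebra_simps power2_eq_square)

locale D_g_at =
  fixes g :: fn3 and \<theta> :: real and u :: fn3 and \<alpha> :: fn3
  assumes g_L2: "g \<in> L2" and u_L2: "u \<in> L2" and \<alpha>_L2: "\<alpha> \<in> L2"
begin

lemma g_measurable[measurable]: "g \<in> borel_measurable lebesgue"
  and u_measurable[measurable]: "u \<in> borel_measurable lebesgue"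
  using g_L2 u_L2 L2_measurable by auto

definition phase :: "real^3 \<Rightarrow> complex" where
  "phase x = exp (- \<i> * complex_of_real (\<theta> * A_real g \<alpha> x))"

lemma norm_phase[simp]: "cmod (phase x) = 1"
  unfolding phase_def by simp

lemma phase_measurable[measurable]: "phase \<in> borel_measurable lebesgue"
  unfolding phase_def[abs_def] using \<alpha>_L2 L2_measurable by measurable

definition dFsq :: "fn3 \<Rightarrow> fn3" where
  "dFsq v = fourier (\<lambda>x. complex_of_real (dsq u v x))"

lemma dFsq_measurable[measurable]: "v \<in> L2 \<Longrightarrow> dFsq v \<in> borel_measurable lebesgue"
  unfolding dFsq_def using L2_measurable by measurable

lemma norm_dFsq_le: "v \<in> L2 \<Longrightarrow> cmod (dFsq v k) \<le> 2 * l2_norm u * l2_norm v"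
  unfolding dFsq_def by (rule norm_fourier_dsq_le[OF u_L2])

lemma dFsq_uminus: "dFsq v (- k) = cnj (dFsq v k)"
  unfolding dFsq_def by (rule fourier_of_real_uminus)

definition dD :: "fn3pair \<Rightarrow> fn3pair" where
  "dD h = (\<lambda>x. phase x * (fst h x - \<i> * complex_of_real (\<theta> * A_real g (snd h) x) * u x),
           \<lambda>k. snd h k - \<i> * complex_of_real \<theta> * g k * dFsq (fst h) k)"

lemma norm_dD_fst_le:
  assumes "\<beta> \<in> L2"
  shows "cmod (fst (dD (v, \<beta>)) x) \<le> 1 * cmod (v x) + 2 * \<bar>\<theta>\<bar> * l2_norm g * l2_norm \<beta> * cmod (u x)"
proof -
  have "cmod (fst (dD (v, \<beta>)) x) = cmod (v x - \<i> * complex_of_real (\<theta> * A_real g \<beta> x) * u x)"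
    unfolding dD_def by (simp add: norm_mult)
  also have "\<dots> \<le> cmod (v x) + \<bar>\<theta>\<bar> * \<bar>A_real g \<beta> x\<bar> * cmod (u x)"
    by (rule order_trans[OF norm_triangle_ineq4]) (simp add: norm_mult abs_mult)
  also have "\<dots> \<le> cmod (v x) + \<bar>\<theta>\<bar> * (2 * l2_norm g * l2_norm \<beta>) * cmod (u x)"
    using abs_A_real_le[OF g_L2 assms] by (simp add: mult_left_mono mult_right_mono)
  finally show ?thesis by (simp add: mult_ac)
qed

lemma norm_dD_snd_le:
  assumes "v \<in> L2"
  shows "cmod (snd (dD (v, \<beta>)) k) \<le> 1 * cmod (\<beta> k) + 2 * \<bar>\<theta>\<bar> * l2_norm u * l2_norm v * cmod (g k)"
proof -
  have "cmod (snd (dD (v, \<beta>)) k) \<le> cmod (\<beta> k) + \<bar>\<theta>\<bar> * cmod (dFsq v k) * cmod (g k)"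
    unfolding dD_def by (simp, rule order_trans[OF norm_triangle_ineq4]) (simp add: norm_mult)
  also have "\<dots> \<le> cmod (\<beta> k) + \<bar>\<theta>\<bar> * (2 * l2_norm u * l2_norm v) * cmod (g k)"
    using norm_dFsq_le[OF assms] by (simp add: mult_left_mono mult_right_mono)
  finally show ?thesis by (simp add: mult_ac)
qed

lemma dD_L2P:
  assumes "h \<in> L2P"
  shows "dD h \<in> L2P"
proof -
  obtain v \<beta> where h: "h = (v, \<beta>)" "v \<in> L2" "\<beta> \<in> L2" using assms unfolding L2P_def by auto
  have [measurable]: "v \<in> borel_measurable lebesgue" "\<beta> \<in> borel_measurable lebesgue"
    "dFsq v \<in> borel_measurable lebesgue"
    using h L2_measurable dFsq_measurable by auto
  have "fst (dD (v, \<beta>)) \<in> L2"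
    by (rule L2_dominated[OF h(2) u_L2 _ norm_dD_fst_le[OF h(3), of v]]) (simp add: dD_def)
  moreover have "snd (dD (v, \<beta>)) \<in> L2"
    by (rule L2_dominated[OF h(3) g_L2 _ norm_dD_snd_le[OF h(2), of \<beta>]]) (simp add: dD_def)
  ultimately show ?thesis unfolding h L2P_def by (simp add: mem_Times_iff)
qed

lemma dD_linear:
  assumes "h1 \<in> L2P" "h2 \<in> L2P"
  shows "dD (padd (pscale a h1) h2) = padd (pscale a (dD h1)) (dD h2)"
proof -
  obtain v1 \<beta>1 where h1: "h1 = (v1, \<beta>1)" "v1 \<in> L2" "\<beta>1 \<in> L2" using assms unfolding L2P_def by auto
  obtain v2 \<beta>2 where h2: "h2 = (v2, \<beta>2)" "v2 \<in> L2" "\<beta>2 \<in> L2" using assms unfolding L2P_def by auto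
  have "dFsq (\<lambda>x. complex_of_real a * v1 x + v2 x) k = complex_of_real a * dFsq v1 k + dFsq v2 k" for k
    unfolding dFsq_def
    using integrable_of_real[OF integrable_dsq[OF u_L2 h1(2)], where 'a=complex]
      integrable_of_real[OF integrable_dsq[OF u_L2 h2(2)], where 'a=complex]
    by (simp add: dsq_linear fourier_add fourier_cmult)
  then show ?thesis
    unfolding h1(1) h2(1) dD_def padd_def pscale_def
    by (simp add: A_real_linear[OF g_L2 h1(3) h2(3)]) (simp add: algebra_simps)
qed

lemma dD_bounded: "\<exists>C. \<forall>h\<in>L2P. pnorm (dD h) \<le> C * pnorm h"
proof (intro exI ballI)
  fix h assume "h \<in> L2P"
  then obtain v \<beta> where h: "h = (v, \<beta>)" "v \<in> L2" "\<beta> \<in> L2" unfolding L2P_def by auto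
  define N where "N = pnorm h"
  define c where "c = 2 * \<theta>^2 * (2 * l2_norm g * l2_norm u)^2"
  have c_nonneg: "0 \<le> c" unfolding c_def by simp
  have v\<beta>: "l2_norm v \<le> N" "l2_norm \<beta> \<le> N"
    unfolding N_def h(1) using l2_norm_le_pnorm[of "(v, \<beta>)"] by auto
  then have v\<beta>2: "l2_sqnorm v \<le> N^2" "l2_sqnorm \<beta> \<le> N^2"
    unfolding l2_norm_power2[symmetric] by (auto intro: power_mono l2_norm_nonneg)
  have "l2_sqnorm (fst (dD h)) \<le> 2 * l2_sqnorm v + c * (l2_norm \<beta>)^2"
    using l2_sqnorm_dominated[OF h(2) u_L2 norm_dD_fst_le[OF h(3), of v]]
    unfolding h(1) c_def l2_norm_power2[symmetric] by (simp add: power_mult_distrib mult_ac)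
  also have "\<dots> \<le> (2 + c) * N^2"
    using v\<beta>2 mult_left_mono[OF power_mono[OF v\<beta>(2) l2_norm_nonneg] c_nonneg, of 2]
    by (simp add: distrib_right)
  finally have fst: "l2_sqnorm (fst (dD h)) \<le> (2 + c) * N^2" .
  have "l2_sqnorm (snd (dD h)) \<le> 2 * l2_sqnorm \<beta> + c * (l2_norm v)^2"
    using l2_sqnorm_dominated[OF h(3) g_L2 norm_dD_snd_le[OF h(2), of \<beta>]]
    unfolding h(1) c_def l2_norm_power2[symmetric] by (simp add: power_mult_distrib mult_ac)
  also have "\<dots> \<le> (2 + c) * N^2"
    using v\<beta>2 mult_left_mono[OF power_mono[OF v\<beta>(1) l2_norm_nonneg] c_nonneg, of 2]
    by (simp add: distrib_right)
  finally have snd: "l2_sqnorm (snd (dD h)) \<le> (2 + c) * N^2" .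
  have "pnorm (dD h) \<le> sqrt ((sqrt (4 + 2 * c))^2 * N^2)"
  proof -
    have "(sqrt (4 + 2 * c))^2 * N^2 = 2 * ((2 + c) * N^2)" using c_nonneg by simp
    then show ?thesis unfolding pnorm_eq_sqrt using fst snd by (intro real_sqrt_le_mono) linarith
  qed
  also have "\<dots> = sqrt (4 + 2 * c) * N"
    unfolding N_def using pnorm_nonneg[of h] c_nonneg by (simp add: real_sqrt_mult)
  finally show "pnorm (dD h) \<le> sqrt (4 + 2 * c) * pnorm h" unfolding N_def .
qed

lemma frechet_remainder_fst:
  fixes x :: "real^3"
  assumes "\<beta> \<in> L2"
  defines "t \<equiv> \<theta> * A_real g \<beta> x"
  shows "fst (frechet_remainder (D_g g \<theta>) (u, \<alpha>) dD (v, \<beta>)) x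
     = phase x * (u x * (exp (- \<i> * complex_of_real t) - 1 + \<i> * complex_of_real t)
                  + v x * (exp (- \<i> * complex_of_real t) - 1))"
proof -
  have "A_real g (\<lambda>k. \<alpha> k + \<beta> k) x = A_real g \<alpha> x + A_real g \<beta> x"
    using A_real_linear[OF g_L2 \<alpha>_L2 assms(1), of 1] by simp
  then have "exp (- \<i> * complex_of_real (\<theta> * A_real g (\<lambda>k. \<alpha> k + \<beta> k) x))
      = phase x * exp (- \<i> * complex_of_real t)"
    unfolding phase_def t_def exp_add[symmetric] by (simp add: algebra_simps)
  then have "fst (D_g g \<theta> (padd (u, \<alpha>) (v, \<beta>))) x = (u x + v x) * (phase x * exp (- \<i> * complex_of_real t))"
    unfolding padd_def fst_conv snd_conv D_g_eq[OF g_L2 L2_add[OF \<alpha>_L2 assms(1)]] by (simp only: fst_conv)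
  moreover have "fst (D_g g \<theta> (u, \<alpha>)) x = u x * phase x"
    unfolding D_g_eq[OF g_L2 \<alpha>_L2] phase_def by simp
  moreover have "fst (dD (v, \<beta>)) x = phase x * (v x - \<i> * complex_of_real t * u x)"
    unfolding dD_def t_def by simp
  ultimately show ?thesis
    unfolding frechet_remainder_def pdiff_def fst_conv by (simp add: algebra_simps)
qed

lemma frechet_remainder_snd:
  assumes "v \<in> L2"
  shows "snd (frechet_remainder (D_g g \<theta>) (u, \<alpha>) dD (v, \<beta>)) k = - \<i> * complex_of_real \<theta> * g k * Fsq v k"
  unfolding frechet_remainder_def pdiff_def padd_def dD_def D_g_def dFsq_def
  by (simp add: Fsq_add[OF u_L2 assms]) (simp add: algebra_simps)

lemma norm_frechet_remainder_fst_le: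
  assumes "\<beta> \<in> L2" "l2_norm \<beta> \<le> N"
  defines "s \<equiv> \<bar>\<theta>\<bar> * (2 * l2_norm g * N)"
  shows "cmod (fst (frechet_remainder (D_g g \<theta>) (u, \<alpha>) dD (v, \<beta>)) x) \<le> s^2 / 2 * cmod (u x) + s * cmod (v x)"
proof -
  define t where "t = \<theta> * A_real g \<beta> x"
  have "\<bar>t\<bar> \<le> \<bar>\<theta>\<bar> * (2 * l2_norm g * l2_norm \<beta>)"
    unfolding t_def abs_mult by (intro mult_left_mono abs_A_real_le g_L2 assms(1)) auto
  also have "\<dots> \<le> s" unfolding s_def using assms(2) by (intro mult_left_mono) (auto simp: l2_norm_nonneg)
  finally have t: "\<bar>t\<bar> \<le> s" .
  then have t2: "t^2 / 2 \<le> s^2 / 2" using power_mono[OF t abs_ge_zero, of 2] by simp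
  have "cmod (fst (frechet_remainder (D_g g \<theta>) (u, \<alpha>) dD (v, \<beta>)) x)
      \<le> cmod (u x) * cmod (exp (- \<i> * complex_of_real t) - 1 + \<i> * complex_of_real t)
        + cmod (v x) * cmod (exp (- \<i> * complex_of_real t) - 1)"
    unfolding frechet_remainder_fst[OF assms(1)] t_def
    by (simp add: norm_mult order_trans[OF norm_triangle_ineq])
  also have "\<dots> \<le> cmod (u x) * (s^2 / 2) + cmod (v x) * s"
    using norm_exp_minus_i_taylor2_le[of t] norm_exp_minus_i_sub_one_le[of t] t t2
    by (intro add_mono mult_left_mono) auto
  finally show ?thesis by (simp add: mult.commute)
qed

lemma norm_frechet_remainder_snd_le:
  assumes "v \<in> L2" "l2_norm v \<le> N"
  shows "cmod (snd (frechet_remainder (D_g g \<theta>) (u, \<alpha>) dD (v, \<beta>)) k) \<le> \<bar>\<theta>\<bar> * N^2 * cmod (g k)"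
proof -
  have "cmod (snd (frechet_remainder (D_g g \<theta>) (u, \<alpha>) dD (v, \<beta>)) k) = \<bar>\<theta>\<bar> * cmod (Fsq v k) * cmod (g k)"
    unfolding frechet_remainder_snd[OF assms(1)] by (simp add: norm_mult)
  also have "\<dots> \<le> \<bar>\<theta>\<bar> * N^2 * cmod (g k)"
    using norm_Fsq_le[OF assms(1), of k] power_mono[OF assms(2) l2_norm_nonneg, of 2]
    unfolding l2_norm_power2 by (intro mult_right_mono mult_left_mono) auto
  finally show ?thesis .
qed

lemma dD_remainder_quadratic:
  "\<exists>K. \<forall>h\<in>L2P. pnorm (frechet_remainder (D_g g \<theta>) (u, \<alpha>) dD h) \<le> K * (pnorm h)^2"
proof (intro exI ballI)
  define G U where "G = l2_norm g" and "U = l2_norm u"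
  fix h assume "h \<in> L2P"
  then obtain v \<beta> where h: "h = (v, \<beta>)" "v \<in> L2" "\<beta> \<in> L2" unfolding L2P_def by auto
  define R where "R = frechet_remainder (D_g g \<theta>) (u, \<alpha>) dD h"
  define N where "N = pnorm h"
  define s where "s = \<bar>\<theta>\<bar> * (2 * G * N)"
  have N: "l2_norm v \<le> N" "l2_norm \<beta> \<le> N"
    unfolding N_def h(1) using l2_norm_le_pnorm[of "(v, \<beta>)"] by auto
  have "l2_sqnorm (fst R) \<le> 2 * (s^2 / 2)^2 * U^2 + 2 * s^2 * (l2_norm v)^2"
    using l2_sqnorm_dominated[OF u_L2 h(2) norm_frechet_remainder_fst_le[OF h(3) N(2), of v]]
    unfolding R_def h(1) s_def G_def U_def l2_norm_power2 by simp
  also have "\<dots> \<le> 2 * (s^2 / 2)^2 * U^2 + 2 * s^2 * N^2"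
    using power_mono[OF N(1) l2_norm_nonneg] by (simp add: mult_left_mono)
  also have "\<dots> = (8 * \<theta>^4 * G^4 * U^2 + 8 * \<theta>^2 * G^2) * N^4"
    unfolding s_def by (simp add: power_mult_distrib power2_abs power4_eq_xxxx power2_eq_square algebra_simps)
  finally have fst: "l2_sqnorm (fst R) \<le> (8 * \<theta>^4 * G^4 * U^2 + 8 * \<theta>^2 * G^2) * N^4" .
  have "l2_sqnorm (snd R) \<le> 2 * (\<bar>\<theta>\<bar> * N^2)^2 * G^2 + 2 * 0^2 * G^2"
    unfolding G_def l2_norm_power2
    by (rule l2_sqnorm_dominated[OF g_L2 g_L2]) (use norm_frechet_remainder_snd_le[OF h(2) N(1)] in \<open>simp add: R_def h(1)\<close>)
  then have snd: "l2_sqnorm (snd R) \<le> 2 * \<theta>^2 * G^2 * N^4"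
    by (simp add: power_mult_distrib power2_abs power4_eq_xxxx power2_eq_square mult_ac)
  define K where "K = 8 * \<theta>^4 * G^4 * U^2 + 10 * \<theta>^2 * G^2"
  have "pnorm R \<le> sqrt (K * (N^2)^2)"
    unfolding pnorm_eq_sqrt K_def using fst snd by (intro real_sqrt_le_mono) (simp add: algebra_simps)
  also have "\<dots> = sqrt K * N^2" by (simp only: real_sqrt_mult real_sqrt_abs abs_power2)
  finally show "pnorm R \<le> sqrt K * (pnorm h)^2" unfolding N_def .
qed

lemma frechet_deriv_at_dD: "frechet_deriv_at (D_g g \<theta>) (u, \<alpha>) dD"
proof -
  obtain C where "\<forall>h\<in>L2P. pnorm (dD h) \<le> C * pnorm h" using dD_bounded by blast
  moreover obtain K where "\<forall>h\<in>L2P. pnorm (frechet_remainder (D_g g \<theta>) (u, \<alpha>) dD h) \<le> K * (pnorm h)^2"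
    using dD_remainder_quadratic by blast
  ultimately show ?thesis
    by (intro frechet_deriv_atI_quadratic_remainder[where C=C and K=K] dD_L2P dD_linear) auto
qed

lemma integrable_L2_mult_dFsq:
  assumes "f \<in> L2" "h \<in> L2" "v \<in> L2"
  shows "integrable lebesgue (\<lambda>k. f k * h k * dFsq v k)"
  using integrable_bounded_mult[OF integrable_L2_mult[OF assms(1,2)] dFsq_measurable[OF assms(3)] norm_dFsq_le[OF assms(3)]]
  by (simp add: mult.commute)

text \<open>Fubini exchanges the two Fourier transforms; this is what cancels the cross terms of \<open>dD\<close>.\<close>

lemma integral_A_real_mult_eq_dFsq:
  assumes "\<beta> \<in> L2" "v \<in> L2"
  shows "integral\<^sup>L lebesgue (\<lambda>x. A_real g \<beta> x * Re (cnj (u x) * v x))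
       = integral\<^sup>L lebesgue (\<lambda>k. Re (cnj (\<beta> k) * g k * dFsq v k))"
proof -
  define \<phi> where "\<phi> = (\<lambda>k. g k * cnj (\<beta> k))"
  have \<phi>: "integrable lebesgue \<phi>"
    unfolding \<phi>_def by (rule integrable_L2_mult[OF g_L2 L2_cnj[OF assms(1)]])
  have w: "integrable lebesgue (\<lambda>x. complex_of_real (dsq u v x))"
    by (rule integrable_of_real[OF integrable_dsq[OF u_L2 assms(2)]])
  have "(\<lambda>x. A_real g \<beta> x * Re (cnj (u x) * v x)) = (\<lambda>x. Re (fourier \<phi> x * complex_of_real (dsq u v x)))"
    by (simp add: A_real_def dsq_def \<phi>_def algebra_simps)
  moreover have "integrable lebesgue (\<lambda>x. fourier \<phi> x * complex_of_real (dsq u v x))"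
    using \<phi> by (intro integrable_bounded_mult[OF w fourier_measurable norm_fourier_le]) auto
  ultimately have "integral\<^sup>L lebesgue (\<lambda>x. A_real g \<beta> x * Re (cnj (u x) * v x))
      = Re (integral\<^sup>L lebesgue (\<lambda>x. fourier \<phi> x * complex_of_real (dsq u v x)))"
    by (simp only: integral_Re)
  also have "\<dots> = Re (integral\<^sup>L lebesgue (\<lambda>k. \<phi> k * dFsq v k))"
    unfolding dFsq_def by (simp only: integral_fourier_mult_swap[OF \<phi> w])
  also have "\<dots> = Re (integral\<^sup>L lebesgue (\<lambda>k. cnj (\<beta> k) * g k * dFsq v k))"
    unfolding \<phi>_def by (simp add: mult_ac)
  also have "\<dots> = integral\<^sup>L lebesgue (\<lambda>k. Re (cnj (\<beta> k) * g k * dFsq v k))"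
    by (rule integral_Re[OF integrable_L2_mult_dFsq[OF L2_cnj[OF assms(1)] g_L2 assms(2)], symmetric])
  finally show ?thesis .
qed

lemma integral_norm_power2_Im_dFsq_eq_0:
  assumes g_even: "AE k in lebesgue. cmod (g (- k)) = cmod (g k)" and "v1 \<in> L2" "v2 \<in> L2"
  shows "integral\<^sup>L lebesgue (\<lambda>k. (cmod (g k))^2 * Im (cnj (dFsq v1 k) * dFsq v2 k)) = 0"
proof -
  define \<psi> where "\<psi> = (\<lambda>k. (cmod (g k))^2 * Im (cnj (dFsq v1 k) * dFsq v2 k))"
  have \<psi>: "\<psi> \<in> borel_measurable lebesgue"
    unfolding \<psi>_def using dFsq_measurable assms(2,3) by measurable
  have odd: "AE k in lebesgue. \<psi> (- k) = - \<psi> k"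
    using g_even by eventually_elim (simp add: \<psi>_def dFsq_uminus algebra_simps)
  have "integral\<^sup>L lebesgue \<psi> = integral\<^sup>L lebesgue (\<lambda>k. \<psi> (- k))"
    by (rule integral_reflect_lebesgue[OF \<psi>, symmetric])
  also have "\<dots> = integral\<^sup>L lebesgue (\<lambda>k. - \<psi> k)"
    by (rule integral_cong_AE) (use \<psi> measurable_compose[OF measurable_uminus_lebesgue \<psi>] odd in auto)
  finally show ?thesis unfolding \<psi>_def by simp
qed

lemma Im_l2_inner_dD_fst:
  assumes "v1 \<in> L2" "\<beta>1 \<in> L2" "v2 \<in> L2" "\<beta>2 \<in> L2"
  shows "Im (l2_inner (fst (dD (v1, \<beta>1))) (fst (dD (v2, \<beta>2))))
      = integral\<^sup>L lebesgue (\<lambda>x. Im (cnj (v1 x) * v2 x))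
        + \<theta> * (integral\<^sup>L lebesgue (\<lambda>x. A_real g \<beta>1 x * Re (cnj (u x) * v2 x))
               - integral\<^sup>L lebesgue (\<lambda>x. A_real g \<beta>2 x * Re (cnj (u x) * v1 x)))"
proof -
  have A_Re: "integrable lebesgue (\<lambda>x. A_real g \<beta> x * Re (cnj (u x) * v x))" if "\<beta> \<in> L2" "v \<in> L2" for \<beta> v
    by (rule integrable_bounded_mult[OF integrable_Re_Im_cnj_mult(1)[OF u_L2 that(2)]])
       (use L2_measurable[OF that(1)] abs_A_real_le[OF g_L2 that(1)] in auto)
  have "Im (l2_inner (fst (dD (v1, \<beta>1))) (fst (dD (v2, \<beta>2))))
      = integral\<^sup>L lebesgue (\<lambda>x. Im (cnj (fst (dD (v1, \<beta>1)) x) * fst (dD (v2, \<beta>2)) x))"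
    by (rule Im_l2_inner[OF L2P_fst L2P_fst, OF dD_L2P dD_L2P]) (use assms in \<open>simp_all add: L2P_def\<close>)
  also have "\<dots> = integral\<^sup>L lebesgue (\<lambda>x. Im (cnj (v1 x) * v2 x)
        + \<theta> * (A_real g \<beta>1 x * Re (cnj (u x) * v2 x) - A_real g \<beta>2 x * Re (cnj (u x) * v1 x)))"
  proof -
    have "Im (cnj (fst (dD (v1, \<beta>1)) x) * fst (dD (v2, \<beta>2)) x) = Im (cnj (v1 x) * v2 x)
        + \<theta> * (A_real g \<beta>1 x * Re (cnj (u x) * v2 x) - A_real g \<beta>2 x * Re (cnj (u x) * v1 x))" for x
      unfolding dD_def fst_conv Im_cnj_mult_phase[OF norm_phase] by (simp add: algebra_simps)
    then show ?thesis by simp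
  qed
  finally show ?thesis
    using integrable_Re_Im_cnj_mult(2)[OF assms(1,3)] A_Re[OF assms(2,3)] A_Re[OF assms(4,1)] by simp
qed

lemma Im_l2_inner_dD_snd:
  assumes "v1 \<in> L2" "\<beta>1 \<in> L2" "v2 \<in> L2" "\<beta>2 \<in> L2"
  shows "Im (l2_inner (snd (dD (v1, \<beta>1))) (snd (dD (v2, \<beta>2))))
      = integral\<^sup>L lebesgue (\<lambda>k. Im (cnj (\<beta>1 k) * \<beta>2 k))
        - \<theta> * integral\<^sup>L lebesgue (\<lambda>k. Re (cnj (\<beta>1 k) * g k * dFsq v2 k))
        + \<theta> * integral\<^sup>L lebesgue (\<lambda>k. Re (cnj (\<beta>2 k) * g k * dFsq v1 k))
        + \<theta>^2 * integral\<^sup>L lebesgue (\<lambda>k. (cmod (g k))^2 * Im (cnj (dFsq v1 k) * dFsq v2 k))"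
proof -
  have "integrable lebesgue (\<lambda>k. Im (cnj (dFsq v1 k) * dFsq v2 k) * (cmod (g k))^2)"
  proof (rule integrable_bounded_mult[OF L2_integrable_power2[OF g_L2]])
    show "(\<lambda>k. Im (cnj (dFsq v1 k) * dFsq v2 k)) \<in> borel_measurable lebesgue"
      using dFsq_measurable assms(1,3) by measurable
    fix k
    have "norm (Im (cnj (dFsq v1 k) * dFsq v2 k)) \<le> cmod (dFsq v1 k) * cmod (dFsq v2 k)"
      using abs_Im_le_cmod[of "cnj (dFsq v1 k) * dFsq v2 k"] by (simp add: norm_mult)
    also have "\<dots> \<le> (2 * l2_norm u * l2_norm v1) * (2 * l2_norm u * l2_norm v2)"
      by (intro mult_mono norm_dFsq_le assms(1,3)) (simp_all add: l2_norm_nonneg)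
    finally show "norm (Im (cnj (dFsq v1 k) * dFsq v2 k))
        \<le> (2 * l2_norm u * l2_norm v1) * (2 * l2_norm u * l2_norm v2)" .
  qed
  then have "integrable lebesgue (\<lambda>k. (cmod (g k))^2 * Im (cnj (dFsq v1 k) * dFsq v2 k))"
    by (simp add: mult.commute)
  moreover have "Im (l2_inner (snd (dD (v1, \<beta>1))) (snd (dD (v2, \<beta>2))))
      = integral\<^sup>L lebesgue (\<lambda>k. Im (cnj (\<beta>1 k) * \<beta>2 k)
        - \<theta> * Re (cnj (\<beta>1 k) * g k * dFsq v2 k) + \<theta> * Re (cnj (\<beta>2 k) * g k * dFsq v1 k)
        + \<theta>^2 * ((cmod (g k))^2 * Im (cnj (dFsq v1 k) * dFsq v2 k)))"
    using Im_l2_inner[OF L2P_snd L2P_snd, OF dD_L2P dD_L2P, of "(v1, \<beta>1)" "(v2, \<beta>2)"] assms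
    unfolding L2P_def dD_def by (simp only: snd_conv Im_cnj_mult_shift mem_Times_iff fst_conv)
  ultimately show ?thesis
    using integrable_Re_Im_cnj_mult(2)[OF assms(2,4)]
      integrable_Re[OF integrable_L2_mult_dFsq[OF L2_cnj[OF assms(2)] g_L2 assms(3)]]
      integrable_Re[OF integrable_L2_mult_dFsq[OF L2_cnj[OF assms(4)] g_L2 assms(1)]]
    by simp
qed

lemma dD_symplectic:
  assumes "AE k in lebesgue. cmod (g (- k)) = cmod (g k)" and "q1 \<in> L2P" "q2 \<in> L2P"
  shows "Im (pinner (dD q1) (dD q2)) = Im (pinner q1 q2)"
proof -
  obtain v1 \<beta>1 v2 \<beta>2 where q: "q1 = (v1, \<beta>1)" "q2 = (v2, \<beta>2)"
    and L2: "v1 \<in> L2" "\<beta>1 \<in> L2" "v2 \<in> L2" "\<beta>2 \<in> L2"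
    using assms(2,3) unfolding L2P_def by auto
  have "Im (pinner (dD q1) (dD q2))
      = Im (l2_inner (fst (dD (v1, \<beta>1))) (fst (dD (v2, \<beta>2))))
        + Im (l2_inner (snd (dD (v1, \<beta>1))) (snd (dD (v2, \<beta>2))))"
    unfolding pinner_def q by simp
  also have "\<dots> = Im (l2_inner v1 v2) + Im (l2_inner \<beta>1 \<beta>2)"
    unfolding Im_l2_inner_dD_fst[OF L2] Im_l2_inner_dD_snd[OF L2]
      integral_A_real_mult_eq_dFsq[OF L2(2,3)] integral_A_real_mult_eq_dFsq[OF L2(4,1)]
      integral_norm_power2_Im_dFsq_eq_0[OF assms(1) L2(1,3)] Im_l2_inner[OF L2(1,3)] Im_l2_inner[OF L2(2,4)]
    by (simp add: algebra_simps)
  also have "\<dots> = Im (pinner q1 q2)"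
    unfolding pinner_def q by simp
  finally show ?thesis .
qed

end

lemma even_or_odd_imp_norm_even:
  assumes "even_fn g \<or> odd_fn g"
  shows "AE k in lebesgue. cmod (g (- k)) = cmod (g k)"
  using assms unfolding even_fn_def odd_fn_def by (auto elim!: AE_mp)

theorem proposition6:
  fixes g :: fn3
  assumes "g \<in> L2"
    and "even_fn g \<or> odd_fn g"
  shows "\<forall>\<theta>::real. \<forall>p\<in>L2P.
           (\<exists>L. frechet_deriv_at (D_g g \<theta>) p L) \<and>
           (\<forall>L. frechet_deriv_at (D_g g \<theta>) p L \<longrightarrow>
              (\<forall>q1\<in>L2P. \<forall>q2\<in>L2P.
                 Im (pinner (L q1) (L q2)) = Im (pinner q1 q2)))"
proof (intro allI ballI conjI impI)
  fix \<theta> :: real and p assume "p \<in> L2P"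
  then obtain u \<alpha> where p: "p = (u, \<alpha>)" "u \<in> L2" "\<alpha> \<in> L2" unfolding L2P_def by auto
  interpret D_g_at g \<theta> u \<alpha> using assms(1) p by unfold_locales
  show "\<exists>L. frechet_deriv_at (D_g g \<theta>) p L"
    unfolding p(1) using frechet_deriv_at_dD by blast
  fix L q1 q2 assume L: "frechet_deriv_at (D_g g \<theta>) p L" and q: "q1 \<in> L2P" "q2 \<in> L2P"
  have "pae_eq (L q) (dD q)" if "q \<in> L2P" for q
    using frechet_deriv_at_unique[OF D_g_L2P[OF assms(1)] \<open>p \<in> L2P\<close> L _ that] frechet_deriv_at_dD p(1)
    by simp
  then have "pinner (L q1) (L q2) = pinner (dD q1) (dD q2)"
    using L q dD_L2P unfolding frechet_deriv_at_def by (intro pinner_cong_pae_eq) auto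
  then show "Im (pinner (L q1) (L q2)) = Im (pinner q1 q2)"
    using dD_symplectic[OF even_or_odd_imp_norm_even[OF assms(2)] q] by simp
qed

end
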